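(* Let $I=(i_1,\ldots,i_r)$ be a composition of $n$ and $V'_I=V_{\overline{I}^{\sim}}$. Then $$V'_I=\sum_{k=i_r}^{n}(-1)^{k-i_r}\binom{k-1}{i_r-1}\,V'_{I[n-k]}\,V'_{(k)}.$$
   Context: Permutations are words. A word $a_1\cdots a_m$ is initially dominated if $a_1>a_j$ for all $j\ge2$; every permutation factors uniquely as $\sigma=u_1\cdots u_r$ into initially dominated words with increasing first letters, and $\mathrm{SC}(\sigma)=(|u_1|,\ldots,|u_r|)$. For a composition $I$ of $n$ with descent set $\mathrm{Des}(I)=\{i_1,\ldots,i_1+\cdots+i_{r-1}\}$, $\overline{I}^{\sim}$ is the composition of $n$ with descent set $\{1,\ldots,n-1\}\setminus\mathrm{Des}(I)$. $\mathrm{RC}(\sigma)$ is the composition with descent set $\{i: i+1\text{ is left of } i\text{ in }\sigma\}$. In $QSym$ (fundamental basis $F_I$) let $U_J=\sum_{\mathrm{SC}(\sigma)=\overline{J}^{\sim}}F_{\mathrm{RC}(\sigma)}$, a basis. $\mathbf{Sym}$ is the algebra of noncommutative symmetric functions with ribbon basis $R_I$, dual to $QSym$ via $\langle F_I,R_J\rangle=\delta_{IJ}$; $(V_I)$ is the basis dual to $(U_I)$. For $0\le m\le n$, $I[m]$ is the composition of $m$ whose ribbon diagram consists of the first $m$ boxes of that of $I$ ($I[0]$ empty, with $V'_{\emptyset}=1$). *)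

theory Defs
  imports Complex_Main
begin

type_synonym comp = "nat list"

definition is_comp :: "comp \<Rightarrow> bool" where
  "is_comp I \<longleftrightarrow> 0 \<notin> set I"

definition comps :: "nat \<Rightarrow> comp set" where
  "comps n = {I. is_comp I \<and> sum_list I = n}"

definition des_set :: "comp \<Rightarrow> nat set" where
  "des_set I = {sum_list (take k I) | k. 0 < k \<and> k < length I}"

definition comp_of_des :: "nat \<Rightarrow> nat set \<Rightarrow> comp" where
  "comp_of_des n D = (THE I. I \<in> comps n \<and> des_set I = D)"

definition conjc :: "comp \<Rightarrow> comp" where
  "conjc I = comp_of_des (sum_list I) ({1..<sum_list I} - des_set I)"

definition perms :: "nat \<Rightarrow> nat list set" where
  "perms n = {s. distinct s \<and> set s = {1..n}}"

definition init_dom :: "nat list \<Rightarrow> bool" where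
  "init_dom u \<longleftrightarrow> u \<noteq> [] \<and> (\<forall>j. 0 < j \<and> j < length u \<longrightarrow> u ! j < u ! 0)"

definition SC :: "nat list \<Rightarrow> comp" where
  "SC s = map length (THE us. concat us = s \<and> (\<forall>u\<in>set us. init_dom u)
                               \<and> sorted_wrt (\<lambda>u v. hd u < hd v) us)"

definition left_of :: "nat \<Rightarrow> nat \<Rightarrow> nat list \<Rightarrow> bool" where
  "left_of x y s \<longleftrightarrow> (\<exists>p q. p < q \<and> q < length s \<and> s ! p = x \<and> s ! q = y)"

definition RC :: "nat list \<Rightarrow> comp" where
  "RC s = comp_of_des (length s) {i. 1 \<le> i \<and> i < length s \<and> left_of (i + 1) i s}"

text \<open>Elements of QSym (coefficients in the fundamental basis F) and of Sym
  (coefficients in the ribbon basis R) are coefficient functions comp => rat.\<close>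
type_synonym sym = "comp \<Rightarrow> rat"

text \<open>Coefficient of F_K in U_J.\<close>
definition Ucoeff :: "comp \<Rightarrow> comp \<Rightarrow> rat" where
  "Ucoeff J K = of_nat (card {s \<in> perms (sum_list J). SC s = conjc J \<and> RC s = K})"

text \<open>V_I: the element of Sym_n dual to U, i.e. <U_J, V_I> = delta_{JI}
  (pairing <F_K, R_L> = delta_{KL}).\<close>
definition V :: "comp \<Rightarrow> sym" where
  "V I = (THE x. (\<forall>K. K \<notin> comps (sum_list I) \<longrightarrow> x K = 0) \<and>
            (\<forall>J \<in> comps (sum_list I).
               (\<Sum>K \<in> comps (sum_list I). Ucoeff J K * x K) = (if J = I then 1 else 0)))"

definition R :: "comp \<Rightarrow> sym" where
  "R I = (\<lambda>K. if K = I then 1 else 0)"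

definition Vp :: "comp \<Rightarrow> sym" where
  "Vp I = (if I = [] then R [] else V (conjc I))"

text \<open>Product of ribbons: R_I R_J = R_{I.J} + R_{I|>J}, R_[] = 1.\<close>
definition near_concat :: "comp \<Rightarrow> comp \<Rightarrow> comp" where
  "near_concat I J = butlast I @ [last I + hd J] @ tl J"

definition rmult :: "comp \<Rightarrow> comp \<Rightarrow> sym" where
  "rmult I J = (if I = [] then R J else if J = [] then R I
                else (\<lambda>K. R (I @ J) K + R (near_concat I J) K))"

definition symmult :: "sym \<Rightarrow> sym \<Rightarrow> sym" where
  "symmult a b = (\<lambda>K. \<Sum>(I, J) \<in> {(I, J). is_comp I \<and> is_comp J \<and> sum_list I + sum_list J = sum_list K}.
                        a I * b J * rmult I J K)"

text \<open>I[m]: composition of m formed by the first m boxes of the ribbon of I.\<close>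
fun ribbon_prefix :: "nat \<Rightarrow> comp \<Rightarrow> comp" where
  "ribbon_prefix 0 I = []"
| "ribbon_prefix (Suc m) [] = []"
| "ribbon_prefix (Suc m) (i # I) =
     (if Suc m \<le> i then [Suc m] else i # ribbon_prefix (Suc m - i) I)"

end

(*
  Pairing with the basis U turns the identity into a computation of scalar products: V'_I is the
  element of degree n with <U_J, V'_I> = [J = conjc I], and V'_(k) = R_(1^k).  Write
  conjc J = C'.(m).  The coefficient of F_K in U_J counts the permutations with SC = C'.(m) and
  RC = K, and multiplying by R_(1^k) keeps exactly the permutations in which the k largest letters
  appear in decreasing order.  Such a permutation consists of the first n-m letters of a
  permutation rho of {1..n-k}, then n, then a shuffle of the remaining letters of rho with
  n-1, ..., n-k+1.  Hence, for every composition A of n-k,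
    <U_J, V'_A R_(1^k)> = binom(m-1, k-1) [A and C' have the same descents below n-m].
  With A = I[n-k], the right-hand side therefore pairs with U_J to the sum over k of
  (-1)^(k-i_r) binom(k-1, i_r-1) binom(m-1, k-1), which is [m = i_r] by binomial inversion;
  together with the condition on descents this says J = conjc I.  The argument is an induction on
  n: at each step the right-hand sides give a dual vector for every J, so the matrix of U is
  invertible and V is well defined.
*)

theory Submission
  imports Defs "Jordan_Normal_Form.Determinant"
begin

lemma is_comp_Nil [simp]: "is_comp []"
  by (simp add: is_comp_def)

lemma is_comp_Cons [simp]: "is_comp (a # L) \<longleftrightarrow> 0 < a \<and> is_comp L"
  by (auto simp: is_comp_def)

lemma is_comp_append [simp]: "is_comp (A @ B) \<longleftrightarrow> is_comp A \<and> is_comp B"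
  by (auto simp: is_comp_def)

lemma replicate_1_in_comps: "replicate k 1 \<in> comps k"
  by (auto simp: comps_def is_comp_def sum_list_replicate)

lemma sum_list_comp_pos: "is_comp L \<Longrightarrow> L \<noteq> [] \<Longrightarrow> 0 < sum_list L"
  by (cases L) auto

lemma comp_eq_Nil_iff: "is_comp L \<Longrightarrow> L = [] \<longleftrightarrow> sum_list L = 0"
  by (cases L) auto

lemma comps_0 [simp]: "comps 0 = {[]}"
  using comp_eq_Nil_iff by (auto simp: comps_def)

lemma comps_Nil_iff: "I \<in> comps n \<Longrightarrow> I = [] \<longleftrightarrow> n = 0"
  using comp_eq_Nil_iff by (auto simp: comps_def)

lemma finite_comps: "finite (comps n)"
proof -
  have "length I \<le> sum_list I" if "is_comp I" for I
    using that by (induction I) auto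
  then have "comps n \<subseteq> {xs. set xs \<subseteq> {0..n} \<and> length xs \<le> n}"
    by (fastforce simp: comps_def dest: member_le_sum_list)
  then show ?thesis
    using finite_lists_length_le[of "{0..n}" n] finite_subset by blast
qed

lemma des_set_Nil [simp]: "des_set [] = {}"
  by (auto simp: des_set_def)

lemma des_set_singleton [simp]: "des_set [a] = {}"
  by (auto simp: des_set_def)

lemma des_set_Cons:
  "des_set (a # L) = (if L = [] then {} else insert a ((+) a ` des_set L))"
proof (cases "L = []")
  case False
  have "des_set (a # L) = insert a ((+) a ` des_set L)"
  proof (intro Set.set_eqI iffI)
    fix x assume "x \<in> des_set (a # L)"
    then obtain j where "j < length L" "x = sum_list (take (Suc j) (a # L))"
      by (auto simp: des_set_def gr0_conv_Suc)
    then show "x \<in> insert a ((+) a ` des_set L)"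
      by (cases "j = 0") (auto simp: des_set_def)
  next
    fix x assume "x \<in> insert a ((+) a ` des_set L)"
    then consider "x = sum_list (take 1 (a # L))"
      | j where "0 < j" "j < length L" "x = sum_list (take (Suc j) (a # L))"
      by (auto simp: des_set_def)
    then show "x \<in> des_set (a # L)"
    proof cases
      case 1
      then show ?thesis
        using False unfolding des_set_def by (intro CollectI exI[of _ 1]) auto
    next
      case (2 j)
      then show ?thesis
        unfolding des_set_def by (intro CollectI exI[of _ "Suc j"]) auto
    qed
  qed
  then show ?thesis
    using False by simp
qed simp

lemma des_set_subset: "is_comp L \<Longrightarrow> des_set L \<subseteq> {1..<sum_list L}"
proof (induction L)
  case (Cons a L)
  then show ?case
    using sum_list_comp_pos[of L] by (auto simp: des_set_Cons)
qed simp

lemma des_set_in_comps_subset: "I \<in> comps n \<Longrightarrow> des_set I \<subseteq> {1..<n}"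
  using des_set_subset by (auto simp: comps_def)

lemma Min_des_set_Cons:
  assumes "is_comp L" "L \<noteq> []"
  shows "Min (des_set (a # L)) = a" and "des_set (a # L) - {a} = (+) a ` des_set L"
proof -
  have "des_set L \<subseteq> {1..<sum_list L}"
    using assms(1) by (rule des_set_subset)
  then show "Min (des_set (a # L)) = a" "des_set (a # L) - {a} = (+) a ` des_set L"
    using assms(2) finite_subset[of "des_set L"] by (auto simp: des_set_Cons intro!: Min_eqI)
qed

lemma des_set_inject:
  "is_comp A \<Longrightarrow> is_comp B \<Longrightarrow> sum_list A = sum_list B \<Longrightarrow> des_set A = des_set B \<Longrightarrow> A = B"
proof (induction A arbitrary: B)
  case Nil
  then show ?case
    using comp_eq_Nil_iff by auto
next
  case (Cons a A)
  then obtain b B' where B: "B = b # B'"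
    by (cases B) auto
  show ?case
  proof (cases "A = []")
    case True
    then show ?thesis
      using Cons.prems B comp_eq_Nil_iff[of B'] by (auto simp: des_set_Cons split: if_splits)
  next
    case False
    then have "B' \<noteq> []"
      using Cons.prems B by (auto simp: des_set_Cons split: if_splits)
    have "a = b"
      using Min_des_set_Cons(1)[of A a] Min_des_set_Cons(1)[of B' b] False \<open>B' \<noteq> []\<close> Cons.prems B
      by auto
    moreover have "des_set A = des_set B'"
      using Min_des_set_Cons(2)[of A a] Min_des_set_Cons(2)[of B' b] False \<open>B' \<noteq> []\<close> Cons.prems B
        \<open>a = b\<close> by (auto simp: inj_image_eq_iff)
    ultimately show ?thesis
      using Cons.IH[of B'] Cons.prems B by auto
  qed
qed

lemma comps_eqI: "A \<in> comps n \<Longrightarrow> B \<in> comps n \<Longrightarrow> des_set A = des_set B \<Longrightarrow> A = B"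
  using des_set_inject[of A B] by (simp add: comps_def)

lemma ex_comp_with_des_set: "D \<subseteq> {1..<n} \<Longrightarrow> \<exists>I\<in>comps n. des_set I = D"
proof (induction n arbitrary: D rule: less_induct)
  case (less n)
  show ?case
  proof (cases "D = {}")
    case True
    show ?thesis
    proof (cases "n = 0")
      case True
      then show ?thesis
        using \<open>D = {}\<close> by (intro bexI[of _ "[]"]) auto
    next
      case False
      then show ?thesis
        using \<open>D = {}\<close> by (intro bexI[of _ "[n]"]) (auto simp: comps_def)
    qed
  next
    case False
    define d where "d = Min D"
    have "finite D"
      using less.prems finite_subset by blast
    then have d: "d \<in> D" "\<And>x. x \<in> D \<Longrightarrow> d \<le> x"
      using False by (auto simp: d_def)
    then have "1 \<le> d" "d < n"
      using less.prems by auto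
    define D' where "D' = (\<lambda>x. x - d) ` (D - {d})"
    have "D' \<subseteq> {1..<n - d}"
      using less.prems d by (force simp: D'_def)
    then obtain J where J: "J \<in> comps (n - d)" "des_set J = D'"
      using less.IH[of "n - d"] \<open>1 \<le> d\<close> \<open>d < n\<close> by auto
    then have "J \<noteq> []"
      using \<open>d < n\<close> comps_Nil_iff by auto
    have "D = insert d ((+) d ` D')"
      using d by (force simp: D'_def image_image)
    then have "des_set (d # J) = D"
      using \<open>J \<noteq> []\<close> J by (simp add: des_set_Cons)
    then show ?thesis
      using J \<open>1 \<le> d\<close> \<open>d < n\<close> by (intro bexI[of _ "d # J"]) (auto simp: comps_def)
  qed
qed

lemma comp_of_des_eqI: "I \<in> comps n \<Longrightarrow> des_set I = D \<Longrightarrow> comp_of_des n D = I"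
  unfolding comp_of_des_def by (rule the_equality) (auto intro: comps_eqI)

lemma comp_of_des:
  assumes "D \<subseteq> {1..<n}"
  shows "comp_of_des n D \<in> comps n" and "des_set (comp_of_des n D) = D"
  using ex_comp_with_des_set[OF assms] comp_of_des_eqI by auto

lemma conjc:
  assumes "I \<in> comps n"
  shows "conjc I \<in> comps n" and "des_set (conjc I) = {1..<n} - des_set I"
    and "conjc (conjc I) = I"
proof -
  have n: "sum_list I = n"
    using assms by (simp add: comps_def)
  show conj: "conjc I \<in> comps n" "des_set (conjc I) = {1..<n} - des_set I"
    unfolding conjc_def n by (simp_all add: comp_of_des)
  then have "sum_list (conjc I) = n"
    by (simp add: comps_def)
  moreover have "{1..<n} - ({1..<n} - des_set I) = des_set I"
    using des_set_in_comps_subset[OF assms] by auto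
  ultimately show "conjc (conjc I) = I"
    unfolding conjc_def[of "conjc I"] using conj comp_of_des_eqI[OF assms] by simp
qed

lemma conjc_Nil [simp]: "conjc [] = []"
  using conjc(1)[of "[]" 0] by simp

lemma des_set_append:
  assumes "A \<noteq> []" "B \<noteq> []"
  shows "des_set (A @ B) = des_set A \<union> insert (sum_list A) ((+) (sum_list A) ` des_set B)"
  using assms(1)
proof (induction A)
  case (Cons a A)
  show ?case
  proof (cases "A = []")
    case False
    then have "des_set ((a # A) @ B)
        = insert a ((+) a ` (des_set A \<union> insert (sum_list A) ((+) (sum_list A) ` des_set B)))"
      using Cons.IH assms(2) by (simp add: des_set_Cons)
    then show ?thesis
      using False by (simp add: des_set_Cons image_Un image_image add.assoc insert_commute)
  qed (use assms(2) in \<open>simp add: des_set_Cons\<close>)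
qed simp

lemma des_set_snoc: "A \<noteq> [] \<Longrightarrow> des_set (A @ [b]) = insert (sum_list A) (des_set A)"
  using des_set_append[of A "[b]"] by auto

lemma des_set_replicate_1: "des_set (replicate k 1) = {1..<k}"
proof (induction k)
  case (Suc k)
  then show ?case
    by (cases k) (auto simp: des_set_Cons image_Suc_atLeastLessThan)
qed simp

lemma conjc_singleton:
  assumes "1 \<le> k"
  shows "conjc [k] = replicate k 1"
proof (rule comps_eqI)
  have "[k] \<in> comps k"
    using assms by (simp add: comps_def)
  then show "conjc [k] \<in> comps k" "des_set (conjc [k]) = des_set (replicate k 1)"
    unfolding des_set_replicate_1 by (simp_all add: conjc)
qed (rule replicate_1_in_comps)

lemma comps_snoc_last:
  assumes "C \<in> comps n" "C \<noteq> []"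
  shows "C = butlast C @ [last C]" and "1 \<le> last C" and "last C \<le> n"
    and "butlast C \<in> comps (n - last C)"
    and "des_set (butlast C) = des_set C \<inter> {1..<n - last C}"
proof -
  show C: "C = butlast C @ [last C]"
    using assms(2) by simp
  have c: "is_comp C" "sum_list C = n"
    using assms(1) by (auto simp: comps_def)
  moreover have "last C \<in> set C"
    using assms(2) by simp
  ultimately have "0 < last C"
    unfolding is_comp_def by (metis gr0I)
  then show "1 \<le> last C"
    by simp
  have s: "sum_list (butlast C) + last C = n"
    using c C by (metis sum_list_append sum_list.Cons sum_list.Nil add_0_right)
  then show "last C \<le> n"
    by simp
  show "butlast C \<in> comps (n - last C)"
    using s c C by (auto simp: comps_def is_comp_def dest: in_set_butlastD)
  show "des_set (butlast C) = des_set C \<inter> {1..<n - last C}"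
  proof (cases "butlast C = []")
    case True
    then show ?thesis
      using C by (metis des_set_Nil des_set_singleton Int_empty_left append_Nil)
  next
    case False
    have "des_set (butlast C) \<subseteq> {1..<sum_list (butlast C)}"
      using des_set_subset c C by (metis is_comp_append)
    moreover have "des_set C = insert (sum_list (butlast C)) (des_set (butlast C))"
      using des_set_snoc[OF False] C by metis
    ultimately show ?thesis
      using s by auto
  qed
qed


lemma ribbon_prefix:
  "is_comp I \<Longrightarrow> m \<le> sum_list I \<Longrightarrow>
    ribbon_prefix m I \<in> comps m \<and> des_set (ribbon_prefix m I) = des_set I \<inter> {1..<m}"
proof (induction m I rule: ribbon_prefix.induct)
  case (3 m i I)
  show ?case
  proof (cases "Suc m \<le> i")
    case True
    then have "des_set (i # I) \<inter> {1..<Suc m} = {}"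
      by (auto simp: des_set_Cons)
    then show ?thesis
      using True by (simp add: comps_def)
  next
    case False
    let ?P = "ribbon_prefix (Suc m - i) I"
    have IH: "?P \<in> comps (Suc m - i)" "des_set ?P = des_set I \<inter> {1..<Suc m - i}"
      using "3.IH" "3.prems" False by auto
    then have P: "?P \<noteq> []"
      using False comps_Nil_iff by auto
    have "I \<noteq> []"
      using "3.prems" False by auto
    moreover have "des_set I \<subseteq> {1..<sum_list I}"
      using "3.prems" des_set_subset by simp
    ultimately have "des_set (i # ?P) = des_set (i # I) \<inter> {1..<Suc m}"
      using IH(2) P False "3.prems" \<open>I \<noteq> []\<close> by (auto simp: des_set_Cons)
    then show ?thesis
      using IH(1) False "3.prems" by (simp add: comps_def)
  qed
qed (simp_all add: comps_def)

section \<open>The factorization into initially dominated words\<close>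

function init_dom_factors :: "nat list \<Rightarrow> nat list list" where
  "init_dom_factors [] = []"
| "init_dom_factors (x # xs) =
     (x # takeWhile (\<lambda>y. y < x) xs) # init_dom_factors (dropWhile (\<lambda>y. y < x) xs)"
  by pat_completeness auto
termination
  by (relation "measure length") (auto simp: le_imp_less_Suc length_dropWhile_le)

lemma init_dom_factors_eq_Nil_iff: "init_dom_factors s = [] \<longleftrightarrow> s = []"
  by (cases s) auto

lemma concat_init_dom_factors: "concat (init_dom_factors s) = s"
  by (induction s rule: init_dom_factors.induct) auto

lemma init_dom_Cons: "init_dom (x # t) \<longleftrightarrow> (\<forall>y\<in>set t. y < x)"
proof -
  have "init_dom (x # t) \<longleftrightarrow> (\<forall>i<length t. t ! i < x)"
    unfolding init_dom_def
  proof safe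
    fix i assume "\<forall>j. 0 < j \<and> j < length (x # t) \<longrightarrow> (x # t) ! j < (x # t) ! 0" "i < length t"
    then show "t ! i < x"
      by (auto dest!: spec[of _ "Suc i"])
  next
    fix j assume "\<forall>i<length t. t ! i < x" "0 < j" "j < length (x # t)"
    then show "(x # t) ! j < (x # t) ! 0"
      by (cases j) auto
  qed
  then show ?thesis
    by (simp add: all_set_conv_all_nth)
qed

lemma init_dom_init_dom_factors: "u \<in> set (init_dom_factors s) \<Longrightarrow> init_dom u"
proof (induction s rule: init_dom_factors.induct)
  case (2 x xs)
  have "\<forall>y\<in>set (takeWhile (\<lambda>y. y < x) xs). y < x"
    by (blast dest: set_takeWhileD)
  then have "init_dom (x # takeWhile (\<lambda>y. y < x) xs)"
    by (simp only: init_dom_Cons)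
  then show ?case
    using 2 by (cases "u = x # takeWhile (\<lambda>y. y < x) xs") simp_all
qed simp

lemma hd_init_dom_factors_ge:
  "u \<in> set (init_dom_factors s) \<Longrightarrow> s \<noteq> [] \<and> hd s \<le> hd u"
proof (induction s rule: init_dom_factors.induct)
  case (2 x xs)
  let ?b = "dropWhile (\<lambda>y. y < x) xs"
  show ?case
  proof (cases "u \<in> set (init_dom_factors ?b)")
    case True
    with "2.IH" have "?b \<noteq> []" "hd ?b \<le> hd u"
      by auto
    moreover have "\<not> hd ?b < x"
      using hd_dropWhile[OF \<open>?b \<noteq> []\<close>] .
    ultimately show ?thesis
      by simp
  qed (use "2.prems" in auto)
qed simp

lemma sorted_init_dom_factors:
  "distinct s \<Longrightarrow> sorted_wrt (\<lambda>u v. hd u < hd v) (init_dom_factors s)"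
proof (induction s rule: init_dom_factors.induct)
  case (2 x xs)
  let ?b = "dropWhile (\<lambda>y. y < x) xs"
  have "distinct ?b"
    using "2.prems" by (metis distinct_append distinct.simps(2) takeWhile_dropWhile_id)
  have "x \<notin> set ?b"
    using "2.prems" by (auto dest: set_dropWhileD)
  have "x < hd v" if "v \<in> set (init_dom_factors ?b)" for v
  proof -
    have "?b \<noteq> []" "hd ?b \<le> hd v"
      using hd_init_dom_factors_ge[OF that] by auto
    moreover have "\<not> hd ?b < x" "hd ?b \<noteq> x"
      using hd_dropWhile[OF \<open>?b \<noteq> []\<close>] hd_in_set[OF \<open>?b \<noteq> []\<close>] \<open>x \<notin> set ?b\<close> by auto
    ultimately show ?thesis
      by simp
  qed
  then show ?case
    using "2.IH" \<open>distinct ?b\<close> by simp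
qed simp

lemma init_dom_factors_unique:
  "concat us = s \<Longrightarrow> \<forall>u\<in>set us. init_dom u \<Longrightarrow> sorted_wrt (\<lambda>u v. hd u < hd v) us \<Longrightarrow>
    us = init_dom_factors s"
proof (induction us arbitrary: s)
  case (Cons u us)
  then obtain x a where u: "u = x # a"
    unfolding init_dom_def by (cases u) auto
  have a: "\<forall>y\<in>set a. y < x"
    using Cons.prems u by (simp add: init_dom_Cons)
  have rest: "concat us = [] \<or> x \<le> hd (concat us)"
  proof (cases us)
    case (Cons v vs)
    then have "v \<noteq> []" "x < hd v"
      using Cons.prems u by (auto simp: init_dom_def)
    then show ?thesis
      using Cons by simp
  qed simp
  moreover have "takeWhile (\<lambda>y. y < x) c = [] \<and> dropWhile (\<lambda>y. y < x) c = c"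
    if "c = [] \<or> x \<le> hd c" for c
    using that by (cases c) simp_all
  ultimately have "takeWhile (\<lambda>y. y < x) (concat us) = [] \<and> dropWhile (\<lambda>y. y < x) (concat us) = concat us"
    by blast
  then have "takeWhile (\<lambda>y. y < x) (a @ concat us) = a"
    and "dropWhile (\<lambda>y. y < x) (a @ concat us) = concat us"
    using a by (simp_all add: takeWhile_append2 dropWhile_append2)
  moreover have "s = x # a @ concat us" "us = init_dom_factors (concat us)"
    using Cons u by simp_all
  ultimately show ?case
    using u by (metis init_dom_factors.simps(2))
qed simp

lemma SC_eq_init_dom_factors: "distinct s \<Longrightarrow> SC s = map length (init_dom_factors s)"
  unfolding SC_def
  by (rule arg_cong[where f = "map length"], rule the_equality)
     (use concat_init_dom_factors init_dom_init_dom_factors sorted_init_dom_factors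
        init_dom_factors_unique in auto)

lemma SC_in_comps: "distinct s \<Longrightarrow> SC s \<in> comps (length s)"
proof -
  assume "distinct s"
  have "sum_list (map length (init_dom_factors s)) = length s"
    using arg_cong[OF concat_init_dom_factors, of length s] by (simp add: length_concat)
  moreover have "[] \<notin> set (init_dom_factors s)"
    using init_dom_init_dom_factors by (auto simp: init_dom_def)
  ultimately show ?thesis
    using \<open>distinct s\<close> by (auto simp: SC_eq_init_dom_factors comps_def is_comp_def)
qed

lemma init_dom_factors_append_max:
  assumes "\<forall>x\<in>set a. x < y" "\<forall>x\<in>set g. x < y"
  shows "init_dom_factors (a @ y # g) = init_dom_factors a @ [y # g]"
  using assms(1)
proof (induction a rule: init_dom_factors.induct)
  case 1
  have "takeWhile (\<lambda>x. x < y) g = g" "dropWhile (\<lambda>x. x < y) g = []"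
    using assms(2) by (simp_all add: takeWhile_eq_all_conv dropWhile_eq_Nil_conv)
  then show ?case
    by (simp only: append_Nil init_dom_factors.simps)
next
  case (2 z zs)
  then have "\<not> y < z"
    by auto
  moreover have "\<forall>x\<in>set (dropWhile (\<lambda>w. w < z) zs). x < y"
    using "2.prems" by (auto dest: set_dropWhileD)
  ultimately show ?case
    using "2.IH" by (simp add: takeWhile_tail dropWhile_append3)
qed

lemma SC_append_max:
  assumes "distinct (a @ y # g)" "\<forall>x\<in>set a. x < y" "\<forall>x\<in>set g. x < y"
  shows "SC (a @ y # g) = SC a @ [Suc (length g)]"
  using assms by (simp add: SC_eq_init_dom_factors init_dom_factors_append_max)

definition lr_maxima :: "nat list \<Rightarrow> nat set" where
  "lr_maxima s = {p \<in> {1..<length s}. \<forall>y\<in>set (take p s). y < s ! p}"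

lemma lr_maxima_take: "lr_maxima (take q s) = lr_maxima s \<inter> {..<q}"
  by (auto simp: lr_maxima_def min_def)

lemma not_in_lr_maxima_Cons:
  assumes "\<forall>y\<in>set a. y < x" "p \<le> length a"
  shows "p \<notin> lr_maxima (x # a @ b)"
proof (cases p)
  case (Suc i)
  then have "(x # a @ b) ! p \<in> set a" "x \<in> set (take p (x # a @ b))"
    using assms(2) by (auto simp: nth_append)
  then have "(x # a @ b) ! p < x" "x \<in> set (take p (x # a @ b))"
    using assms(1) by auto
  then show ?thesis
    unfolding lr_maxima_def using less_asym by blast
qed (simp add: lr_maxima_def)

lemma shifted_in_lr_maxima_Cons_iff:
  assumes a: "\<forall>y\<in>set a. y < x" and b: "b \<noteq> [] \<Longrightarrow> x < hd b"
  shows "Suc (length a) + q \<in> lr_maxima (x # a @ b) \<longleftrightarrow> q = 0 \<and> b \<noteq> [] \<or> q \<in> lr_maxima b"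
proof -
  have take: "take (Suc (length a) + q) (x # a @ b) = x # a @ take q b"
    and nth: "(x # a @ b) ! (Suc (length a) + q) = b ! q"
    by (simp_all add: nth_append)
  show ?thesis
  proof
    assume "q = 0 \<and> b \<noteq> [] \<or> q \<in> lr_maxima b"
    then have qb: "q < length b" and max: "\<forall>y\<in>set (take q b). y < b ! q"
      by (auto simp: lr_maxima_def)
    have "b ! 0 \<le> b ! q"
    proof (cases q)
      case (Suc i)
      then have "b ! 0 \<in> set (take q b)"
        using qb by (cases b) auto
      then show ?thesis
        using max by fastforce
    qed simp
    moreover have "x < b ! 0"
      using b qb hd_conv_nth[of b] by force
    ultimately have "x < b ! q"
      by simp
    then show "Suc (length a) + q \<in> lr_maxima (x # a @ b)"
      using a qb max unfolding lr_maxima_def take nth by auto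
  qed (auto simp: lr_maxima_def take nth)
qed

lemma lr_maxima_Cons_factor:
  assumes a: "\<forall>y\<in>set a. y < x" and b: "b \<noteq> [] \<Longrightarrow> x < hd b"
  shows "lr_maxima (x # a @ b) =
    (if b = [] then {} else insert (Suc (length a)) ((+) (Suc (length a)) ` lr_maxima b))"
proof (cases "b = []")
  case True
  have "p \<notin> lr_maxima (x # a @ b)" for p
    using not_in_lr_maxima_Cons[OF a, of p b] True by (auto simp: lr_maxima_def)
  then show ?thesis
    using True by auto
next
  case False
  have "p \<in> lr_maxima (x # a @ b) \<longleftrightarrow> p \<in> insert (Suc (length a)) ((+) (Suc (length a)) ` lr_maxima b)"
    for p
  proof (cases "p \<le> length a")
    case True
    then show ?thesis
      using not_in_lr_maxima_Cons[OF a True] by auto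
  next
    case False
    then obtain q where "p = Suc (length a) + q"
      by (metis add_Suc less_imp_Suc_add not_le)
    then show ?thesis
      using shifted_in_lr_maxima_Cons_iff[OF a b, of q] \<open>b \<noteq> []\<close> by auto
  qed
  then have "lr_maxima (x # a @ b) = insert (Suc (length a)) ((+) (Suc (length a)) ` lr_maxima b)"
    by blast
  then show ?thesis
    using False by simp
qed

lemma des_set_SC: "distinct s \<Longrightarrow> des_set (SC s) = lr_maxima s"
  unfolding SC_eq_init_dom_factors
proof (induction s rule: init_dom_factors.induct)
  case (2 x xs)
  let ?a = "takeWhile (\<lambda>y. y < x) xs" and ?b = "dropWhile (\<lambda>y. y < x) xs"
  have "distinct ?b"
    using "2.prems" by (metis distinct_append distinct.simps(2) takeWhile_dropWhile_id)
  have "x \<notin> set ?b"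
    using "2.prems" by (auto dest: set_dropWhileD)
  then have "?b \<noteq> [] \<Longrightarrow> x < hd ?b"
    using hd_dropWhile hd_in_set by (metis linorder_neqE_nat)
  then have "lr_maxima (x # ?a @ ?b) =
      (if ?b = [] then {} else insert (Suc (length ?a)) ((+) (Suc (length ?a)) ` lr_maxima ?b))"
    by (intro lr_maxima_Cons_factor) (auto dest: set_takeWhileD)
  then show ?case
    using "2.IH" \<open>distinct ?b\<close> "2.prems" by (simp add: des_set_Cons init_dom_factors_eq_Nil_iff)
qed (simp add: lr_maxima_def)

lemma des_set_SC_take:
  assumes "distinct s" "q \<le> length s"
  shows "des_set (SC (take q s)) = des_set (SC s) \<inter> {1..<q}"
  using assms lr_maxima_take[of q s] des_set_SC[of s] des_set_SC[of "take q s"]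
  by (auto simp: lr_maxima_def)

lemma left_of_iff_append: "left_of x y s \<longleftrightarrow> (\<exists>a b c. s = a @ x # b @ y # c)"
proof
  assume "left_of x y s"
  then obtain p q where pq: "p < q" "q < length s" "s ! p = x" "s ! q = y"
    unfolding left_of_def by auto
  have "s = take p s @ x # drop (Suc p) s"
    using pq id_take_nth_drop[of p s] by simp
  moreover have "drop (Suc p) s = take (q - Suc p) (drop (Suc p) s) @ y # drop (Suc q) s"
    using pq id_take_nth_drop[of "q - Suc p" "drop (Suc p) s"] by simp
  ultimately show "\<exists>a b c. s = a @ x # b @ y # c"
    by (metis append_Cons)
next
  assume "\<exists>a b c. s = a @ x # b @ y # c"
  then obtain a b c where "s = a @ x # b @ y # c"
    by blast
  then show "left_of x y s"
    unfolding left_of_def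
    by (intro exI[of _ "length a"] exI[of _ "Suc (length a + length b)"]) (simp add: nth_append)
qed

lemma left_of_filter: "left_of x y s \<Longrightarrow> P x \<Longrightarrow> P y \<Longrightarrow> left_of x y (filter P s)"
  unfolding left_of_iff_append by force

lemma left_of_total:
  "x \<in> set s \<Longrightarrow> y \<in> set s \<Longrightarrow> x \<noteq> y \<Longrightarrow> left_of x y s \<or> left_of y x s"
  unfolding left_of_def by (metis in_set_conv_nth nat_neq_iff)

lemma left_of_asym: "distinct s \<Longrightarrow> left_of x y s \<Longrightarrow> \<not> left_of y x s"
  unfolding left_of_def by (metis nth_eq_iff_index_eq order.strict_trans order_less_irrefl)

lemma left_of_trans: "distinct s \<Longrightarrow> left_of x y s \<Longrightarrow> left_of y z s \<Longrightarrow> left_of x z s"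
  unfolding left_of_def by (metis nth_eq_iff_index_eq order.strict_trans)

lemma left_of_filter_iff:
  assumes "distinct s" "P x" "P y" "x \<in> set s" "y \<in> set s"
  shows "left_of x y (filter P s) \<longleftrightarrow> left_of x y s"
proof
  assume xy: "left_of x y (filter P s)"
  have "distinct (filter P s)"
    using assms by simp
  with xy have "x \<noteq> y" "\<not> left_of y x (filter P s)"
    using left_of_asym by blast+
  then show "left_of x y s"
    using left_of_total assms left_of_filter by blast
qed (use assms left_of_filter in auto)

lemma length_perms: "s \<in> perms n \<Longrightarrow> length s = n"
  unfolding perms_def using distinct_card by fastforce

lemma finite_perms: "finite (perms n)"
proof -
  have "perms n \<subseteq> {xs. set xs \<subseteq> {1..n} \<and> length xs = n}"
    using length_perms by (auto simp: perms_def)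
  then show ?thesis
    using finite_lists_length_eq[of "{1..n}" n] finite_subset by blast
qed

lemma filter_le_in_perms: "s \<in> perms n \<Longrightarrow> N \<le> n \<Longrightarrow> filter (\<lambda>x. x \<le> N) s \<in> perms N"
  unfolding perms_def by auto

(* i + 1 stands left of i in s exactly when i is a descent of the inverse permutation. *)

definition inverse_descents :: "nat list \<Rightarrow> nat set" where
  "inverse_descents s = {i. 1 \<le> i \<and> i < length s \<and> left_of (i + 1) i s}"

lemma RC:
  assumes "s \<in> perms n"
  shows "RC s \<in> comps n" and "des_set (RC s) = inverse_descents s"
proof -
  have "inverse_descents s \<subseteq> {1..<n}"
    using length_perms[OF assms] by (auto simp: inverse_descents_def)
  then show "RC s \<in> comps n" "des_set (RC s) = inverse_descents s"
    using comp_of_des length_perms[OF assms] by (simp_all add: RC_def inverse_descents_def)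
qed

lemma inverse_descents_filter_le:
  assumes "s \<in> perms n" "N \<le> n"
  shows "inverse_descents (filter (\<lambda>x. x \<le> N) s) = inverse_descents s \<inter> {1..<N}"
proof -
  have "length (filter (\<lambda>x. x \<le> N) s) = N" "length s = n"
    using assms filter_le_in_perms length_perms by blast+
  moreover have "left_of (i + 1) i (filter (\<lambda>x. x \<le> N) s) \<longleftrightarrow> left_of (i + 1) i s"
    if "1 \<le> i" "i < N" for i
    using assms that by (intro left_of_filter_iff) (auto simp: perms_def)
  ultimately show ?thesis
    using assms(2) unfolding inverse_descents_def by auto
qed

section \<open>Permutations whose top values appear in decreasing order\<close>

lemma left_of_Suc_chain_trans:
  assumes L: "distinct L" and step: "\<forall>i. a \<le> i \<and> Suc i < b \<longrightarrow> left_of (Suc i) i L"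
    and "a \<le> y" "y < x" "x < b"
  shows "left_of x y L"
proof -
  have "left_of (y + Suc d) y L" if "y + Suc d < b" for d
    using that
  proof (induction d)
    case (Suc d)
    then have "left_of (y + Suc (Suc d)) (y + Suc d) L" "left_of (y + Suc d) y L"
      using step \<open>a \<le> y\<close> by auto
    then show ?case
      using left_of_trans[OF L] by blast
  qed (use step \<open>a \<le> y\<close> in auto)
  then show ?thesis
    using assms(4,5) by (metis Suc_diff_Suc add_Suc_right le_add_diff_inverse less_imp_le)
qed

lemma left_of_Suc_iff_rev_upt:
  assumes L: "distinct L" "set L = {a..<b}"
  shows "(\<forall>i. a \<le> i \<and> Suc i < b \<longrightarrow> left_of (Suc i) i L) \<longleftrightarrow> L = rev [a..<b]"
proof
  assume step: "\<forall>i. a \<le> i \<and> Suc i < b \<longrightarrow> left_of (Suc i) i L"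
  note chain = left_of_Suc_chain_trans[OF L(1) step]
  have "sorted_wrt (>) L"
    unfolding sorted_wrt_iff_nth_less
  proof (intro allI impI)
    fix i j assume ij: "i < j" "j < length L"
    have "left_of (L ! i) (L ! j) L"
      using ij unfolding left_of_def by auto
    moreover have "L ! i \<noteq> L ! j"
      using ij L(1) nth_eq_iff_index_eq by fastforce
    moreover have "L ! i \<in> {a..<b}" "L ! j \<in> {a..<b}"
      using ij L(2) nth_mem[of _ L] by auto
    ultimately show "L ! j < L ! i"
      using chain[of "L ! i" "L ! j"] left_of_asym[OF L(1)] by force
  qed
  then have "sorted_wrt (<) (rev L)"
    by (simp add: sorted_wrt_rev)
  then have "rev L = [a..<b]"
    using L strict_sorted_iff[of "rev L"] sorted_distinct_set_unique[of "rev L" "[a..<b]"] by auto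
  then show "L = rev [a..<b]"
    by (metis rev_rev_ident)
next
  assume "L = rev [a..<b]"
  moreover have "rev [a..<b] = rev [Suc (Suc i)..<b] @ Suc i # i # rev [a..<i]"
    if "a \<le> i" "Suc i < b" for i
  proof -
    have "[a..<b] = [a..<i] @ i # Suc i # [Suc (Suc i)..<b]"
      using that upt_add_eq_append[of a i "b - i"] by (simp add: upt_conv_Cons)
    then show ?thesis
      by simp
  qed
  ultimately show "\<forall>i. a \<le> i \<and> Suc i < b \<longrightarrow> left_of (Suc i) i L"
    unfolding left_of_iff_append by (metis append.left_neutral)
qed

lemma top_inverse_descents_iff:
  assumes "s \<in> perms n" "N \<le> n"
  shows "{N + 1..<n} \<subseteq> inverse_descents s \<longleftrightarrow> filter (\<lambda>x. N < x) s = rev [N + 1..<n + 1]"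
proof -
  let ?L = "filter (\<lambda>x. N < x) s"
  have s: "distinct s" "set s = {1..n}" "length s = n"
    using assms length_perms by (auto simp: perms_def)
  have "left_of (Suc i) i ?L \<longleftrightarrow> left_of (Suc i) i s" if "N + 1 \<le> i" "Suc i < n + 1" for i
    using that s by (intro left_of_filter_iff) auto
  then have "{N + 1..<n} \<subseteq> inverse_descents s \<longleftrightarrow>
      (\<forall>i. N + 1 \<le> i \<and> Suc i < n + 1 \<longrightarrow> left_of (Suc i) i ?L)"
    using s(3) by (auto simp: inverse_descents_def subset_iff)
  also have "\<dots> \<longleftrightarrow> ?L = rev [N + 1..<n + 1]"
    using s assms(2) by (intro left_of_Suc_iff_rev_upt) auto
  finally show ?thesis .
qed

lemma perms_split_at_max:
  assumes "s \<in> perms n" "0 < n"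
  obtains a g where "s = a @ n # g" and "SC s = SC a @ [Suc (length g)]"
proof -
  have s: "distinct s" "set s = {1..n}"
    using assms(1) by (auto simp: perms_def)
  then obtain a g where ag: "s = a @ n # g"
    using assms(2) split_list[of n s] by auto
  have "set a \<union> set g = set s - {n}"
    using s(1) ag by auto
  also have "\<dots> = {1..<n}"
    unfolding s(2) by auto
  finally have "\<forall>x\<in>set a. x < n" "\<forall>x\<in>set g. x < n"
    by auto
  then show thesis
    using that ag s(1) SC_append_max by simp
qed

lemma top_decreasing_decomp:
  assumes s: "s \<in> perms n" and m: "1 \<le> m" "m \<le> n" and "N < n"
    and SC: "SC s = C' @ [m]" and top: "filter (\<lambda>x. N < x) s = rev [N + 1..<n + 1]"
  obtains a g where "s = a @ n # g" "SC a = C'" "length a = n - m" "length g = m - 1"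
    and "filter (\<lambda>x. N < x) a = []" "filter (\<lambda>x. N < x) g = rev [N + 1..<n]"
proof -
  have "0 < n"
    using \<open>N < n\<close> by simp
  then obtain a g where ag: "s = a @ n # g" "SC s = SC a @ [Suc (length g)]"
    by (rule perms_split_at_max[OF s])
  have "n \<notin> set (filter (\<lambda>x. N < x) a)"
    using s ag(1) by (auto simp: perms_def)
  have "SC a = C'" "length g = m - 1"
    using SC ag(2) by auto
  moreover have "length a = n - m"
    using length_perms[OF s] ag(1) \<open>length g = m - 1\<close> m by simp
  moreover have tops: "filter (\<lambda>x. N < x) a @ n # filter (\<lambda>x. N < x) g = n # rev [N + 1..<n]"
    using top ag(1) \<open>N < n\<close> by simp
  moreover have "filter (\<lambda>x. N < x) a = []"
    using tops \<open>n \<notin> set (filter (\<lambda>x. N < x) a)\<close> by (cases "filter (\<lambda>x. N < x) a") auto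
  ultimately show thesis
    using that ag(1) by simp
qed

lemma insert_max_before_tops:
  assumes "q \<le> N" "N < n" "r \<in> perms N" "\<gamma> \<in> shuffles (drop q r) (rev [N + 1..<n])"
  defines "s \<equiv> take q r @ n # \<gamma>"
  shows "s \<in> perms n" and "SC s = SC (take q r) @ [n - q]"
    and "filter (\<lambda>x. N < x) s = rev [N + 1..<n + 1]"
    and "filter (\<lambda>x. x \<le> N) s = r" and "drop (Suc q) s = \<gamma>"
proof -
  have r: "distinct r" "set r = {1..N}" "length r = N"
    using assms(3) length_perms by (auto simp: perms_def)
  have take_drop: "set (take q r) \<union> set (drop q r) = {1..N}" "set (take q r) \<inter> set (drop q r) = {}"
    using r set_take_disj_set_drop_if_distinct by (metis append_take_drop_id set_append, blast)
  then have take: "set (take q r) \<subseteq> {1..N}" and drop: "set (drop q r) \<subseteq> {1..N}"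
    by blast+
  have disj: "set (drop q r) \<inter> set (rev [N + 1..<n]) = {}"
    using take_drop by auto
  have \<gamma>: "distinct \<gamma>" "set \<gamma> = set (drop q r) \<union> {N + 1..<n}" "length \<gamma> = n - q - 1"
    using distinct_disjoint_shuffles[OF _ _ disj assms(4)] set_shuffles[OF assms(4)]
      length_shuffles[OF assms(4)] r assms(1,2) by auto
  have "filter (\<lambda>x. x \<le> N) \<gamma> = filter (\<lambda>x. x \<in> set (drop q r)) \<gamma>"
    and "filter (\<lambda>x. N < x) \<gamma> = filter (\<lambda>x. x \<notin> set (drop q r)) \<gamma>"
    using \<gamma>(2) take_drop by (auto intro!: filter_cong)
  then have filters: "filter (\<lambda>x. x \<le> N) \<gamma> = drop q r" "filter (\<lambda>x. N < x) \<gamma> = rev [N + 1..<n]"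
    using filter_shuffles_disjoint1[OF disj assms(4)] by simp_all
  have dist: "distinct s" and "set s = {1..n}"
    using r(1) \<gamma>(1,2) take_drop take assms(2) unfolding s_def by auto
  then show "s \<in> perms n"
    by (simp add: perms_def)
  have "\<forall>x\<in>set (take q r). x < n" "\<forall>x\<in>set \<gamma>. x < n"
    using take drop \<gamma>(2) assms(2) by fastforce+
  then show "SC s = SC (take q r) @ [n - q]"
    using SC_append_max[of "take q r" n \<gamma>] dist \<gamma>(3) assms(1,2) unfolding s_def by simp
  show "filter (\<lambda>x. N < x) s = rev [N + 1..<n + 1]"
    using filters take assms(2) by (fastforce simp: s_def filter_empty_conv)
  have "filter (\<lambda>x. x \<le> N) (take q r) = take q r"
    using take by (auto simp: filter_id_conv)
  then show "filter (\<lambda>x. x \<le> N) s = r"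
    using filters assms(2) by (simp add: s_def)
  show "drop (Suc q) s = \<gamma>"
    using r(3) assms(1) by (simp add: s_def)
qed

lemma top_decreasing_empty:
  assumes m: "1 \<le> m" "m \<le> n" and k: "m < k" "k \<le> n"
  shows "{s \<in> perms n. SC s = C' @ [m] \<and> filter (\<lambda>x. n - k < x) s = rev [n - k + 1..<n + 1]} = {}"
proof safe
  fix s assume s: "s \<in> perms n" "SC s = C' @ [m]" "filter (\<lambda>x. n - k < x) s = rev [n - k + 1..<n + 1]"
  have "n - k < n"
    using k m by simp
  then obtain g where "length g = m - 1" "filter (\<lambda>x. n - k < x) g = rev [n - k + 1..<n]"
    using top_decreasing_decomp[OF s(1) m _ s(2,3)] by blast
  then show "s \<in> {}"
    using length_filter_le[of "\<lambda>x. n - k < x" g] k m by simp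
qed

lemma top_decreasing_insertion:
  assumes s: "s \<in> perms n" and m: "1 \<le> m" "m \<le> n" and k: "1 \<le> k" "k \<le> m"
    and SC: "SC s = C' @ [m]" and top: "filter (\<lambda>x. n - k < x) s = rev [n - k + 1..<n + 1]"
  obtains r \<gamma> where "r \<in> perms (n - k)" "SC (take (n - m) r) = C'"
    and "\<gamma> \<in> shuffles (drop (n - m) r) (rev [n - k + 1..<n])" and "s = take (n - m) r @ n # \<gamma>"
proof -
  define N where "N = n - k"
  have "N < n"
    using k m by (simp add: N_def)
  then obtain a g where ag: "s = a @ n # g" "SC a = C'" "length a = n - m"
    "filter (\<lambda>x. N < x) a = []" "filter (\<lambda>x. N < x) g = rev [N + 1..<n]"
    using top_decreasing_decomp[OF s m _ SC top] unfolding N_def by blast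
  define r where "r = filter (\<lambda>x. x \<le> N) s"
  have "filter (\<lambda>x. x \<le> N) a = a"
    using ag(4) by (auto simp: filter_id_conv filter_empty_conv)
  then have r: "take (n - m) r = a" "drop (n - m) r = filter (\<lambda>x. x \<le> N) g"
    using ag(1,3) \<open>N < n\<close> by (simp_all add: r_def)
  have "g \<in> shuffles (drop (n - m) r) (rev [N + 1..<n])"
    using partition_in_shuffles[of g "\<lambda>x. x \<le> N"] ag(5) r(2) by (simp add: not_le)
  moreover have "r \<in> perms N"
    using filter_le_in_perms[OF s] by (simp add: r_def N_def)
  ultimately show thesis
    using that r(1) ag(1,2) by (simp add: N_def)
qed

lemma card_shuffles_drop_tops:
  assumes r: "r \<in> perms (n - k)" and "1 \<le> k" "k \<le> m" "m \<le> n"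
  shows "card (shuffles (drop (n - m) r) (rev [n - k + 1..<n])) = (m - 1) choose (k - 1)"
proof -
  have "set r = {1..n - k}" "length r = n - k"
    using r length_perms by (auto simp: perms_def)
  then have "set (drop (n - m) r) \<inter> set (rev [n - k + 1..<n]) = {}"
    using set_drop_subset[of "n - m" r] by auto
  then have "card (shuffles (drop (n - m) r) (rev [n - k + 1..<n]))
      = (length (drop (n - m) r) + length (rev [n - k + 1..<n])) choose length (drop (n - m) r)"
    by (rule card_disjoint_shuffles)
  also have "\<dots> = (m - 1) choose (k - 1)"
    using \<open>length r = n - k\<close> assms(2-4) binomial_symmetric[of "k - 1" "m - 1"] by simp
  finally show ?thesis .
qed

lemma sum_top_decreasing:
  fixes f :: "nat list \<Rightarrow> 'a::comm_semiring_1"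
  assumes m: "1 \<le> m" "m \<le> n" and k: "1 \<le> k" "k \<le> n"
  shows "(\<Sum>s | s \<in> perms n \<and> SC s = C' @ [m] \<and> filter (\<lambda>x. n - k < x) s = rev [n - k + 1..<n + 1].
            f (filter (\<lambda>x. x \<le> n - k) s))
       = of_nat ((m - 1) choose (k - 1)) * (\<Sum>r | r \<in> perms (n - k) \<and> SC (take (n - m) r) = C'. f r)"
    (is "sum _ ?S = _ * sum _ ?R")
proof (cases "k \<le> m")
  case False
  then have "?S = {}" "(m - 1) choose (k - 1) = 0"
    using top_decreasing_empty m k by (auto simp: binomial_eq_0)
  then show ?thesis
    by (simp only: sum.empty of_nat_0 mult_zero_left)
next
  case True
  define N q where "N = n - k" and "q = n - m"
  define tops where "tops = rev [N + 1..<n]"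
  define Dom where "Dom = (SIGMA r:?R. shuffles (drop q r) tops)"
  define Phi where "Phi = (\<lambda>(r, \<gamma>). take q r @ n # \<gamma>)"
  have qN: "q \<le> N" "N < n" "n - q = m"
    using True m k by (auto simp: N_def q_def)
  have Phi: "Phi x \<in> ?S \<and> filter (\<lambda>x. x \<le> N) (Phi x) = fst x \<and> drop (Suc q) (Phi x) = snd x"
    if "x \<in> Dom" for x
    using that insert_max_before_tops[OF qN(1,2)] qN(3)
    by (auto simp: Dom_def Phi_def N_def q_def tops_def)
  have inj: "inj_on Phi Dom"
  proof (rule inj_onI)
    fix x y assume "x \<in> Dom" "y \<in> Dom" "Phi x = Phi y"
    then show "x = y"
      using Phi[of x] Phi[of y] by (simp add: prod_eq_iff)
  qed
  have image: "?S = Phi ` Dom"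
  proof safe
    fix s assume "s \<in> perms n" "SC s = C' @ [m]" "filter (\<lambda>x. n - k < x) s = rev [n - k + 1..<n + 1]"
    then obtain r \<gamma> where "r \<in> perms (n - k)" "SC (take (n - m) r) = C'"
      "\<gamma> \<in> shuffles (drop (n - m) r) (rev [n - k + 1..<n])" "s = take (n - m) r @ n # \<gamma>"
      by (rule top_decreasing_insertion[OF _ m k(1) True])
    then have "(r, \<gamma>) \<in> Dom" "s = Phi (r, \<gamma>)"
      by (simp_all add: Dom_def Phi_def N_def q_def tops_def)
    then show "s \<in> Phi ` Dom"
      by blast
  qed (use Phi in auto)
  have "sum (\<lambda>s. f (filter (\<lambda>x. x \<le> N) s)) ?S = (\<Sum>x\<in>Dom. f (fst x))"
    using Phi by (intro sum.reindex_cong[OF inj image]) simp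
  also have "\<dots> = (\<Sum>r\<in>?R. \<Sum>\<gamma>\<in>shuffles (drop q r) tops. f r)"
    unfolding Dom_def by (subst sum.Sigma) (auto simp: prod.case_eq_if finite_perms)
  also have "\<dots> = (\<Sum>r\<in>?R. of_nat ((m - 1) choose (k - 1)) * f r)"
    using card_shuffles_drop_tops[OF _ k(1) True m(2)] by (simp add: q_def N_def tops_def)
  finally show ?thesis
    by (simp add: N_def sum_distrib_left)
qed

section \<open>Multiplying by the ribbon of a column\<close>

lemma des_set_append_replicate_1:
  assumes "I \<in> comps N" "I \<noteq> []" "1 \<le> k"
  shows "I @ replicate k 1 \<in> comps (N + k)"
    and "des_set (I @ replicate k 1) = des_set I \<union> {N..<N + k}"
proof -
  show "I @ replicate k 1 \<in> comps (N + k)"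
    using assms replicate_1_in_comps[of k] by (simp add: comps_def)
  have "replicate k (1::nat) \<noteq> []" "sum_list I = N"
    using assms by (auto simp: comps_def)
  then have "des_set (I @ replicate k 1) = des_set I \<union> insert N ((+) N ` {1..<k})"
    using des_set_append[OF assms(2)] des_set_replicate_1 by simp
  also have "insert N ((+) N ` {1..<k}) = {N..<N + k}"
    using assms(3) by (auto simp: image_iff intro: bexI[of _ "_ - N"])
  finally show "des_set (I @ replicate k 1) = des_set I \<union> {N..<N + k}" .
qed

lemma des_set_near_concat_replicate_1:
  assumes "I \<in> comps N" "I \<noteq> []" "1 \<le> k"
  shows "near_concat I (replicate k 1) \<in> comps (N + k)"
    and "des_set (near_concat I (replicate k 1)) = des_set I \<union> {N + 1..<N + k}"
proof -
  obtain I0 x where I: "I = I0 @ [x]"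
    using assms(2) by (metis append_butlast_last_id)
  obtain j where k: "k = Suc j"
    using assms(3) by (cases k) auto
  have nc: "near_concat I (replicate k 1) = (I0 @ [x + 1]) @ replicate j 1"
    using I k by (simp add: near_concat_def)
  have I': "I0 @ [x + 1] \<in> comps (N + 1)"
    using assms(1) I by (auto simp: comps_def)
  have des: "des_set (I0 @ [x + 1]) = des_set I"
    unfolding I by (cases "I0 = []") (simp_all add: des_set_snoc)
  show "near_concat I (replicate k 1) \<in> comps (N + k)"
    unfolding nc using I' k replicate_1_in_comps[of j] by (simp add: comps_def)
  show "des_set (near_concat I (replicate k 1)) = des_set I \<union> {N + 1..<N + k}"
  proof (cases "j = 0")
    case True
    then show ?thesis
      unfolding nc using des k by simp
  next
    case False
    then show ?thesis
      unfolding nc using des_set_append_replicate_1(2)[OF I' _, of j] des k by simp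
  qed
qed

lemma interval_split_cases:
  fixes E D :: "nat set"
  assumes E: "E \<subseteq> {1..<N + k}" "D = E \<inter> {1..<N}" "{N + 1..<N + k} \<subseteq> E" and k: "1 \<le> k"
  shows "E = D \<union> {N..<N + k} \<or> E = D \<union> {N + 1..<N + k}"
proof -
  have split: "E = D \<union> (E \<inter> {N}) \<union> {N + 1..<N + k}"
  proof (rule Set.set_eqI)
    fix x
    consider "x < N" | "x = N" | "N < x"
      by linarith
    then show "x \<in> E \<longleftrightarrow> x \<in> D \<union> (E \<inter> {N}) \<union> {N + 1..<N + k}"
      using E by cases auto
  qed
  show ?thesis
  proof (cases "N \<in> E")
    case True
    then have "E \<inter> {N} = {N}"
      by auto
    moreover have "{N} \<union> {N + 1..<N + k} = {N..<N + k}"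
      using k by auto
    ultimately show ?thesis
      using split by (metis Un_assoc)
  next
    case False
    then have "E \<inter> {N} = {}"
      by auto
    then show ?thesis
      using split by simp
  qed
qed

lemma rmult_replicate_1:
  assumes I: "I \<in> comps N" and k: "1 \<le> k"
  shows "rmult I (replicate k 1) K =
    (if K \<in> comps (N + k) \<and> des_set K \<inter> {1..<N} = des_set I \<and> {N + 1..<N + k} \<subseteq> des_set K
     then 1 else 0)"
proof (cases "I = []")
  case True
  then have "N = 0"
    using I comps_Nil_iff by blast
  have "K = replicate k 1 \<longleftrightarrow> K \<in> comps k \<and> {1..<k} \<subseteq> des_set K"
  proof
    assume "K \<in> comps k \<and> {1..<k} \<subseteq> des_set K"
    moreover from this have "des_set K = des_set (replicate k 1)"
      unfolding des_set_replicate_1 using des_set_in_comps_subset[of K k] by auto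
    ultimately show "K = replicate k 1"
      using comps_eqI replicate_1_in_comps by blast
  qed (use replicate_1_in_comps des_set_replicate_1 in auto)
  then show ?thesis
    using True \<open>N = 0\<close> by (simp add: rmult_def R_def)
next
  case False
  let ?ones = "replicate k (1::nat)"
  note app = des_set_append_replicate_1[OF I False k]
  note near = des_set_near_concat_replicate_1[OF I False k]
  have dI: "des_set I \<subseteq> {1..<N}"
    using des_set_in_comps_subset[OF I] .
  have "N \<in> des_set (I @ ?ones)" "N \<notin> des_set (near_concat I ?ones)"
    using app(2) near(2) dI k by auto
  then have distinct: "I @ ?ones \<noteq> near_concat I ?ones"
    by metis
  have "K \<in> comps (N + k) \<and> des_set K \<inter> {1..<N} = des_set I \<and> {N + 1..<N + k} \<subseteq> des_set K
      \<longleftrightarrow> K = I @ ?ones \<or> K = near_concat I ?ones"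
  proof
    assume K: "K \<in> comps (N + k) \<and> des_set K \<inter> {1..<N} = des_set I \<and> {N + 1..<N + k} \<subseteq> des_set K"
    then have "des_set K = des_set I \<union> {N..<N + k} \<or> des_set K = des_set I \<union> {N + 1..<N + k}"
      using des_set_in_comps_subset[of K "N + k"] k by (intro interval_split_cases) auto
    then show "K = I @ ?ones \<or> K = near_concat I ?ones"
      using K app near by (auto intro: comps_eqI)
  qed (use app near dI in auto)
  moreover have "rmult I ?ones K = R (I @ ?ones) K + R (near_concat I ?ones) K"
    using False k by (simp add: rmult_def)
  moreover have "\<dots> = (if K = I @ ?ones \<or> K = near_concat I ?ones then 1 else 0)"
    using distinct by (auto simp: R_def)
  ultimately show ?thesis
    by presburger
qed

lemma finite_comp_pairs: "finite {(I, J). is_comp I \<and> is_comp J \<and> sum_list I + sum_list J = n}"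
proof -
  have "{(I, J). is_comp I \<and> is_comp J \<and> sum_list I + sum_list J = n} \<subseteq>
      (\<Union>j\<le>n. comps j) \<times> (\<Union>j\<le>n. comps j)"
    by (auto simp: comps_def)
  moreover have "finite ((\<Union>j\<le>n. comps j) \<times> (\<Union>j\<le>n. comps j))"
    using finite_comps by auto
  ultimately show ?thesis
    by (rule finite_subset)
qed

lemma symmult_R_right:
  assumes a: "\<forall>I. I \<notin> comps N \<longrightarrow> a I = 0" and J: "is_comp J"
    and K: "sum_list K = N + sum_list J"
  shows "symmult a (R J) K = (\<Sum>I\<in>comps N. a I * rmult I J K)"
proof -
  let ?P = "{(I, J). is_comp I \<and> is_comp J \<and> sum_list I + sum_list J = sum_list K}"
  have "symmult a (R J) K = (\<Sum>(I, J')\<in>?P \<inter> comps N \<times> {J}. a I * R J J' * rmult I J' K)"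
    unfolding symmult_def
    by (rule sum.mono_neutral_right[OF finite_comp_pairs]) (use a in \<open>auto simp: R_def\<close>)
  also have "?P \<inter> comps N \<times> {J} = comps N \<times> {J}"
    using J K by (auto simp: comps_def)
  finally show ?thesis
    by (simp add: sum.cartesian_product' R_def)
qed

lemma symmult_R_replicate_1:
  assumes a: "\<forall>I. I \<notin> comps N \<longrightarrow> a I = 0" and k: "1 \<le> k"
  shows "symmult a (R (replicate k 1)) K =
    (if K \<in> comps (N + k) \<and> {N + 1..<N + k} \<subseteq> des_set K
     then a (comp_of_des N (des_set K \<inter> {1..<N})) else 0)"
proof (cases "K \<in> comps (N + k)")
  case True
  define A where "A = comp_of_des N (des_set K \<inter> {1..<N})"
  have A: "A \<in> comps N" "des_set A = des_set K \<inter> {1..<N}"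
    using comp_of_des[of "des_set K \<inter> {1..<N}" N] by (auto simp: A_def)
  have "des_set K \<inter> {1..<N} = des_set I \<longleftrightarrow> I = A" if "I \<in> comps N" for I
    using that A comps_eqI by auto
  then have "a I * rmult I (replicate k 1) K =
      (if I = A then (if {N + 1..<N + k} \<subseteq> des_set K then a I else 0) else 0)"
    if "I \<in> comps N" for I
    using that True rmult_replicate_1[OF that k, of K] by simp
  moreover have "symmult a (R (replicate k 1)) K = (\<Sum>I\<in>comps N. a I * rmult I (replicate k 1) K)"
    using True replicate_1_in_comps[of k] by (intro symmult_R_right[OF a]) (auto simp: comps_def)
  ultimately have "symmult a (R (replicate k 1)) K =
      (\<Sum>I\<in>comps N. if I = A then (if {N + 1..<N + k} \<subseteq> des_set K then a I else 0) else 0)"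
    by simp
  also have "\<dots> = (if {N + 1..<N + k} \<subseteq> des_set K then a A else 0)"
    using A(1) finite_comps by (simp add: sum.delta')
  finally show ?thesis
    using True by (simp add: A_def)
next
  case False
  have "a I * R (replicate k 1) J * rmult I J K = 0" for I J
  proof (cases "I \<in> comps N \<and> J = replicate k 1")
    case True
    then show ?thesis
      using rmult_replicate_1[of I N k K] k False by simp
  qed (use a in \<open>auto simp: R_def\<close>)
  then have "symmult a (R (replicate k 1)) K = 0"
    unfolding symmult_def by (intro sum.neutral) (auto split: prod.splits)
  with False show ?thesis
    by simp
qed

section \<open>The dual basis V\<close>

lemma sum_right_inverse_imp_left_inverse:
  fixes u w :: "'i \<Rightarrow> 'i \<Rightarrow> 'a::field"
  assumes S: "finite S"
    and uw: "\<And>i j. i \<in> S \<Longrightarrow> j \<in> S \<Longrightarrow> (\<Sum>l\<in>S. u i l * w l j) = (if i = j then 1 else 0)"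
    and "i \<in> S" "j \<in> S"
  shows "(\<Sum>l\<in>S. w i l * u l j) = (if i = j then 1 else 0)"
proof -
  define M where "M = card S"
  obtain e where e: "bij_betw e {0..<M} S"
    using ex_bij_betw_nat_finite[OF S] unfolding M_def by blast
  have e_in: "e i \<in> S" if "i < M" for i
    using e that by (auto dest: bij_betwE)
  have e_eq: "e i = e j \<longleftrightarrow> i = j" if "i < M" "j < M" for i j
    using e that by (auto simp: bij_betw_def inj_on_def)
  have reindex: "(\<Sum>l\<in>{0..<M}. h (e l)) = (\<Sum>l\<in>S. h l)" for h :: "'i \<Rightarrow> 'a"
    using sum.reindex_bij_betw[OF e] .
  define U :: "'a mat" where "U = mat M M (\<lambda>(i, j). u (e i) (e j))"
  define W :: "'a mat" where "W = mat M M (\<lambda>(i, j). w (e i) (e j))"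
  have U: "U \<in> carrier_mat M M" and W: "W \<in> carrier_mat M M"
    unfolding U_def W_def by auto
  have "U * W = 1\<^sub>m M"
  proof (rule eq_matI)
    fix i j assume "i < dim_row (1\<^sub>m M :: 'a mat)" "j < dim_col (1\<^sub>m M :: 'a mat)"
    then have ij: "i < M" "j < M"
      by auto
    then have "(U * W) $$ (i, j) = (\<Sum>l\<in>{0..<M}. u (e i) (e l) * w (e l) (e j))"
      by (simp add: U_def W_def scalar_prod_def)
    also have "\<dots> = (if e i = e j then 1 else 0)"
      using reindex[of "\<lambda>l. u (e i) l * w l (e j)"] uw[OF e_in e_in] ij by simp
    finally show "(U * W) $$ (i, j) = 1\<^sub>m M $$ (i, j)"
      using e_eq ij by simp
  qed (use U W in auto)
  then have WU: "W * U = 1\<^sub>m M"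
    by (rule mat_mult_left_right_inverse[OF U W])
  obtain i' j' where "i' < M" "j' < M" "e i' = i" "e j' = j"
    using e \<open>i \<in> S\<close> \<open>j \<in> S\<close> by (auto simp: bij_betw_def)
  moreover from this have "(W * U) $$ (i', j') = (\<Sum>l\<in>S. w i l * u l j)"
    using reindex[of "\<lambda>l. w i l * u l j"] by (simp add: U_def W_def scalar_prod_def)
  ultimately show ?thesis
    using WU e_eq[of i' j'] by auto
qed

lemma right_inverse_imp_trivial_kernel:
  fixes u :: "'i \<Rightarrow> 'i \<Rightarrow> 'a::field"
  assumes S: "finite S"
    and inv: "\<forall>j\<in>S. \<exists>w. \<forall>i\<in>S. (\<Sum>l\<in>S. u i l * w l) = (if i = j then 1 else 0)"
    and x: "\<forall>i\<in>S. (\<Sum>l\<in>S. u i l * x l) = 0" and "j \<in> S"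
  shows "x j = 0"
proof -
  obtain w where w: "\<And>i j. i \<in> S \<Longrightarrow> j \<in> S \<Longrightarrow> (\<Sum>l\<in>S. u i l * w j l) = (if i = j then 1 else 0)"
    using bchoice[OF inv] by metis
  have "x j = (\<Sum>i\<in>S. if j = i then x i else 0)"
    using S \<open>j \<in> S\<close> by simp
  also have "\<dots> = (\<Sum>i\<in>S. (\<Sum>l\<in>S. w l j * u l i) * x i)"
    using sum_right_inverse_imp_left_inverse[of S u "\<lambda>l j. w j l" j] S w \<open>j \<in> S\<close>
    by (intro sum.cong) simp_all
  also have "\<dots> = (\<Sum>i\<in>S. \<Sum>l\<in>S. w l j * u l i * x i)"
    by (simp add: sum_distrib_right)
  also have "\<dots> = (\<Sum>l\<in>S. \<Sum>i\<in>S. w l j * u l i * x i)"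
    by (rule sum.swap)
  also have "\<dots> = (\<Sum>l\<in>S. w l j * (\<Sum>i\<in>S. u l i * x i))"
    by (simp add: sum_distrib_left mult.assoc)
  also have "\<dots> = 0"
    using x by simp
  finally show ?thesis .
qed

definition U_dual :: "nat \<Rightarrow> comp \<Rightarrow> sym \<Rightarrow> bool" where
  "U_dual n J x \<longleftrightarrow> (\<forall>K. K \<notin> comps n \<longrightarrow> x K = 0) \<and>
     (\<forall>J'\<in>comps n. (\<Sum>K\<in>comps n. Ucoeff J' K * x K) = (if J' = J then 1 else 0))"

lemma U_dual_unique:
  assumes ex: "\<forall>J\<in>comps n. \<exists>w. U_dual n J w" and "U_dual n J x" "U_dual n J y"
  shows "x = y"
proof
  fix K
  have "x K - y K = 0"
  proof (cases "K \<in> comps n")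
    case True
    have "\<forall>j\<in>comps n. \<exists>w. \<forall>i\<in>comps n. (\<Sum>l\<in>comps n. Ucoeff i l * w l) = (if i = j then 1 else 0)"
      using ex unfolding U_dual_def by blast
    moreover have "\<forall>i\<in>comps n. (\<Sum>l\<in>comps n. Ucoeff i l * (x l - y l)) = 0"
      using assms(2,3) by (simp add: U_dual_def right_diff_distrib sum_subtractf)
    ultimately show ?thesis
      by (rule right_inverse_imp_trivial_kernel[OF finite_comps _ _ True])
  qed (use assms(2,3) in \<open>simp add: U_dual_def\<close>)
  then show "x K = y K"
    by simp
qed

lemma V_eqI:
  assumes "\<forall>J\<in>comps n. \<exists>w. U_dual n J w" "J \<in> comps n" "U_dual n J x"
  shows "V J = x"
proof -
  have "(THE x. U_dual n J x) = x"
    using assms U_dual_unique by blast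
  moreover have "sum_list J = n"
    using assms(2) by (simp add: comps_def)
  ultimately show ?thesis
    by (simp add: V_def U_dual_def)
qed

lemma U_dual_R_Nil: "U_dual 0 [] (R [])"
proof -
  have "perms 0 = {[]}"
    by (auto simp: perms_def)
  moreover have "SC [] = []" "RC [] = []"
    using SC_in_comps[of "[]"] RC(1)[of "[]" 0] by (auto simp: perms_def)
  ultimately have "{s \<in> perms 0. SC s = [] \<and> RC s = []} = {[]}"
    by auto
  then have "Ucoeff [] [] = 1"
    by (simp add: Ucoeff_def)
  then show ?thesis
    by (auto simp: U_dual_def R_def)
qed

lemma sum_Ucoeff:
  assumes "J \<in> comps n"
  shows "(\<Sum>K\<in>comps n. Ucoeff J K * f K) = (\<Sum>\<sigma> | \<sigma> \<in> perms n \<and> SC \<sigma> = conjc J. f (RC \<sigma>))"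
proof -
  let ?P = "{\<sigma> \<in> perms n. SC \<sigma> = conjc J}"
  have n: "sum_list J = n"
    using assms by (simp add: comps_def)
  have "(\<Sum>\<sigma>\<in>?P. f (RC \<sigma>)) = (\<Sum>K\<in>comps n. \<Sum>\<sigma> | \<sigma> \<in> ?P \<and> RC \<sigma> = K. f (RC \<sigma>))"
    using RC(1) finite_perms by (intro sum.group[symmetric] finite_comps) auto
  also have "\<dots> = (\<Sum>K\<in>comps n. Ucoeff J K * f K)"
  proof (intro sum.cong refl)
    fix K
    have "{\<sigma>. \<sigma> \<in> ?P \<and> RC \<sigma> = K} = {s \<in> perms (sum_list J). SC s = conjc J \<and> RC s = K}"
      using n by auto
    then show "(\<Sum>\<sigma> | \<sigma> \<in> ?P \<and> RC \<sigma> = K. f (RC \<sigma>)) = Ucoeff J K * f K"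
      by (simp add: Ucoeff_def)
  qed
  finally show ?thesis
    by simp
qed

lemma sum_U_dual_SC_prefix:
  assumes q: "q \<le> N" and C': "C' \<in> comps q" and A: "A \<in> comps N"
    and a: "U_dual N (conjc A) a"
  shows "(\<Sum>\<rho> | \<rho> \<in> perms N \<and> SC (take q \<rho>) = C'. a (RC \<rho>))
    = (if des_set A \<inter> {1..<q} = des_set C' then 1 else 0)"
proof -
  define T where "T = {D \<in> comps N. des_set D \<inter> {1..<q} = des_set C'}"
  have "SC (take q \<rho>) = C' \<longleftrightarrow> SC \<rho> \<in> T" if "\<rho> \<in> perms N" for \<rho>
  proof -
    have "distinct \<rho>" "length \<rho> = N"
      using that length_perms by (auto simp: perms_def)
    then have "SC (take q \<rho>) \<in> comps q" "SC \<rho> \<in> comps N"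
      and "des_set (SC (take q \<rho>)) = des_set (SC \<rho>) \<inter> {1..<q}"
      using SC_in_comps[of "take q \<rho>"] SC_in_comps[of \<rho>] des_set_SC_take[of \<rho> q] q by auto
    then show ?thesis
      using comps_eqI[OF _ C'] by (auto simp: T_def)
  qed
  then have "(\<Sum>\<rho> | \<rho> \<in> perms N \<and> SC (take q \<rho>) = C'. a (RC \<rho>))
      = (\<Sum>\<rho> | \<rho> \<in> perms N \<and> SC \<rho> \<in> T. a (RC \<rho>))"
    by (intro sum.cong) auto
  also have "\<dots> = (\<Sum>D\<in>T. \<Sum>\<rho> | \<rho> \<in> {\<rho> \<in> perms N. SC \<rho> \<in> T} \<and> SC \<rho> = D. a (RC \<rho>))"
    using finite_perms finite_comps by (intro sum.group[symmetric]) (auto simp: T_def)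
  also have "\<dots> = (\<Sum>D\<in>T. if D = A then 1 else 0)"
  proof (intro sum.cong refl)
    fix D assume "D \<in> T"
    then have D: "D \<in> comps N" "conjc (conjc D) = D" "conjc D \<in> comps N"
      using conjc by (auto simp: T_def)
    then have "(\<Sum>\<rho> | \<rho> \<in> {\<rho> \<in> perms N. SC \<rho> \<in> T} \<and> SC \<rho> = D. a (RC \<rho>))
        = (\<Sum>K\<in>comps N. Ucoeff (conjc D) K * a K)"
    proof -
      have "{\<rho>. \<rho> \<in> {\<rho> \<in> perms N. SC \<rho> \<in> T} \<and> SC \<rho> = D} = {\<sigma> \<in> perms N. SC \<sigma> = conjc (conjc D)}"
        using \<open>D \<in> T\<close> D(2) by auto
      then show ?thesis
        using sum_Ucoeff[OF D(3), of a] by simp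
    qed
    also have "\<dots> = (if conjc D = conjc A then 1 else 0)"
      using a D(3) by (simp add: U_dual_def)
    also have "\<dots> = (if D = A then 1 else 0)"
      using D(2) conjc(3)[OF A] by metis
    finally show "(\<Sum>\<rho> | \<rho> \<in> {\<rho> \<in> perms N. SC \<rho> \<in> T} \<and> SC \<rho> = D. a (RC \<rho>))
        = (if D = A then 1 else 0)" .
  qed
  also have "\<dots> = (if A \<in> T then 1 else 0)"
    using finite_comps by (simp add: T_def sum.delta')
  finally show ?thesis
    using A by (simp add: T_def)
qed

lemma sum_Ucoeff_symmult_R_replicate_1:
  assumes k: "1 \<le> k" "k \<le> n" and A: "A \<in> comps (n - k)" and a: "U_dual (n - k) (conjc A) a"
    and J: "J \<in> comps n" and C: "conjc J = C' @ [m]"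
  shows "(\<Sum>K\<in>comps n. Ucoeff J K * symmult a (R (replicate k 1)) K) =
    (if des_set A \<inter> {1..<n - m} = des_set C' then of_nat ((m - 1) choose (k - 1)) else 0)"
proof -
  define N where "N = n - k"
  have "conjc J \<in> comps n" "conjc J \<noteq> []"
    using conjc(1)[OF J] C by auto
  note C_last = comps_snoc_last[OF this, unfolded C, simplified]
  have m: "1 \<le> m" "m \<le> n" and C': "C' \<in> comps (n - m)"
    using C_last by auto
  have a0: "\<forall>I. I \<notin> comps N \<longrightarrow> a I = 0"
    using a by (simp add: U_dual_def N_def)
  define f where "f K = (if {N + 1..<n} \<subseteq> des_set K then a (comp_of_des N (des_set K \<inter> {1..<N})) else 0)" for K
  have "symmult a (R (replicate k 1)) K = f K" if "K \<in> comps n" for K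
    using symmult_R_replicate_1[OF a0 k(1), of K] that k by (simp add: f_def N_def)
  then have "(\<Sum>K\<in>comps n. Ucoeff J K * symmult a (R (replicate k 1)) K)
      = (\<Sum>\<sigma> | \<sigma> \<in> perms n \<and> SC \<sigma> = conjc J. f (RC \<sigma>))"
    using sum_Ucoeff[OF J, of f] by simp
  also have "\<dots> = (\<Sum>\<sigma> | \<sigma> \<in> perms n \<and> SC \<sigma> = C' @ [m].
      if filter (\<lambda>x. N < x) \<sigma> = rev [N + 1..<n + 1] then a (RC (filter (\<lambda>x. x \<le> N) \<sigma>)) else 0)"
  proof (intro sum.cong refl)
    fix \<sigma> assume "\<sigma> \<in> {\<sigma>. \<sigma> \<in> perms n \<and> SC \<sigma> = C' @ [m]}"
    then have \<sigma>: "\<sigma> \<in> perms n" "N \<le> n"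
      by (auto simp: N_def)
    have "comp_of_des N (inverse_descents \<sigma> \<inter> {1..<N}) = RC (filter (\<lambda>x. x \<le> N) \<sigma>)"
      using RC[OF filter_le_in_perms[OF \<sigma>]] inverse_descents_filter_le[OF \<sigma>]
      by (intro comp_of_des_eqI) auto
    then show "f (RC \<sigma>) = (if filter (\<lambda>x. N < x) \<sigma> = rev [N + 1..<n + 1]
        then a (RC (filter (\<lambda>x. x \<le> N) \<sigma>)) else 0)"
      using top_inverse_descents_iff[OF \<sigma>] RC(2)[OF \<sigma>(1)] by (simp add: f_def)
  qed (simp add: C)
  also have "\<dots> = (\<Sum>\<sigma> | \<sigma> \<in> perms n \<and> SC \<sigma> = C' @ [m] \<and> filter (\<lambda>x. N < x) \<sigma> = rev [N + 1..<n + 1].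
      a (RC (filter (\<lambda>x. x \<le> N) \<sigma>)))"
    using finite_perms by (simp add: sum.inter_filter[symmetric] conj_assoc)
  also have "\<dots> = of_nat ((m - 1) choose (k - 1))
      * (\<Sum>\<rho> | \<rho> \<in> perms N \<and> SC (take (n - m) \<rho>) = C'. a (RC \<rho>))"
    unfolding N_def by (rule sum_top_decreasing[OF m k])
  also have "\<dots> = (if des_set A \<inter> {1..<n - m} = des_set C' then of_nat ((m - 1) choose (k - 1)) else 0)"
  proof (cases "k \<le> m")
    case True
    then show ?thesis
      using sum_U_dual_SC_prefix[of "n - m" N C' A a] C' A a by (simp add: N_def)
  next
    case False
    then show ?thesis
      using m by (simp add: binomial_eq_0)
  qed
  finally show ?thesis .
qed

lemma sum_alternating_choose_choose:
  assumes a: "1 \<le> a" "a \<le> n" and m: "1 \<le> m" "m \<le> n"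
  shows "(\<Sum>k\<in>{a..n}. (-1) ^ (k - a) * of_nat ((k - 1) choose (a - 1)) * of_nat ((m - 1) choose (k - 1)))
    = (if m = a then 1 else 0 :: 'a::comm_ring_1)"
proof -
  define h :: "nat \<Rightarrow> 'a" where
    "h k = (-1) ^ (k - a) * of_nat ((k - 1) choose (a - 1)) * of_nat ((m - 1) choose (k - 1))" for k
  have vanish: "h k = 0" if "m < k" for k
    using that m by (simp add: h_def binomial_eq_0)
  show ?thesis
  proof (cases "a \<le> m")
    case False
    then have "(\<Sum>k\<in>{a..n}. h k) = 0"
      using vanish by (intro sum.neutral) auto
    then show ?thesis
      using False by (simp add: h_def)
  next
    case True
    have "(\<Sum>k\<in>{a..n}. h k) = (\<Sum>k\<in>{a..m}. h k)"
      using vanish m by (intro sum.mono_neutral_right) auto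
    also have "\<dots> = (\<Sum>i\<le>m - a. h (i + a))"
      using True by (simp add: atLeast0AtMost[symmetric] sum.shift_bounds_cl_nat_ivl[symmetric])
    also have "\<dots> = of_nat ((m - 1) choose (a - 1)) * (\<Sum>i\<le>m - a. (-1) ^ i * of_nat ((m - a) choose i))"
    proof -
      have "h (i + a) = of_nat ((m - 1) choose (a - 1)) * ((-1) ^ i * of_nat ((m - a) choose i))"
        if "i \<le> m - a" for i
      proof -
        have "a - 1 \<le> i + a - 1" "i + a - 1 \<le> m - 1" "m - 1 - (a - 1) = m - a" "i + a - 1 - (a - 1) = i"
          using that a True by auto
        then have "((i + a - 1) choose (a - 1)) * ((m - 1) choose (i + a - 1))
            = ((m - 1) choose (a - 1)) * ((m - a) choose i)"
          using choose_mult[of "a - 1" "i + a - 1" "m - 1"] by (simp add: ac_simps)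
        moreover have "h (i + a)
            = (-1) ^ i * of_nat (((i + a - 1) choose (a - 1)) * ((m - 1) choose (i + a - 1)))"
          by (simp add: h_def mult.assoc)
        ultimately show ?thesis
          by (simp add: mult.left_commute)
      qed
      then show ?thesis
        by (simp add: sum_distrib_left)
    qed
    also have "\<dots> = (if m = a then 1 else 0)"
      using True choose_alternating_sum[of "m - a", where 'a = 'a] by auto
    finally show ?thesis
      by (simp add: h_def)
  qed
qed

lemma conjc_eq_iff:
  assumes I: "I \<in> comps n" "I \<noteq> []" and J: "J \<in> comps n" and C: "conjc J = C' @ [m]"
  shows "des_set I \<inter> {1..<n - m} = des_set C' \<and> m = last I \<longleftrightarrow> J = conjc I"
proof
  assume "des_set I \<inter> {1..<n - m} = des_set C' \<and> m = last I"
  then have m: "m = last I" and "des_set (butlast I) = des_set C'"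
    using comps_snoc_last(5)[OF I] by auto
  moreover have "C' \<in> comps (n - m)"
    using comps_snoc_last(4)[of "conjc J" n] conjc(1)[OF J] C by simp
  ultimately have "butlast I = C'"
    using comps_snoc_last(4)[OF I] comps_eqI by blast
  then have "I = conjc J"
    using comps_snoc_last(1)[OF I] m C by simp
  then show "J = conjc I"
    using conjc(3)[OF J] by simp
next
  assume "J = conjc I"
  then have "I = C' @ [m]"
    using conjc(3)[OF I(1)] C by simp
  then show "des_set I \<inter> {1..<n - m} = des_set C' \<and> m = last I"
    using comps_snoc_last(5)[OF I] by simp
qed

lemma U_dual_Vp:
  assumes "\<forall>J\<in>comps N. U_dual N J (V J)" and "A \<in> comps N"
  shows "U_dual N (conjc A) (Vp A)"
proof (cases "A = []")
  case True
  then show ?thesis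
    using assms(2) comps_Nil_iff U_dual_R_Nil by (simp add: Vp_def)
next
  case False
  then show ?thesis
    using assms conjc(1) by (simp add: Vp_def)
qed

lemma symmult_Vp_ribbon_prefix:
  assumes IH: "\<forall>N<n. \<forall>J\<in>comps N. U_dual N J (V J)" and I: "I \<in> comps n" and k: "1 \<le> k" "k \<le> n"
  shows "K \<notin> comps n \<Longrightarrow> symmult (Vp (ribbon_prefix (n - k) I)) (R (replicate k 1)) K = 0"
    and "J \<in> comps n \<Longrightarrow> conjc J = C' @ [m] \<Longrightarrow>
      (\<Sum>K\<in>comps n. Ucoeff J K * symmult (Vp (ribbon_prefix (n - k) I)) (R (replicate k 1)) K)
      = (if des_set I \<inter> {1..<n - m} = des_set C' then of_nat ((m - 1) choose (k - 1)) else 0)"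
proof -
  let ?A = "ribbon_prefix (n - k) I"
  have A: "?A \<in> comps (n - k)" "des_set ?A = des_set I \<inter> {1..<n - k}"
    using ribbon_prefix[of I "n - k"] I by (auto simp: comps_def)
  have dual: "U_dual (n - k) (conjc ?A) (Vp ?A)"
    using IH k A by (intro U_dual_Vp) auto
  then have "\<forall>B. B \<notin> comps (n - k) \<longrightarrow> Vp ?A B = 0"
    by (simp add: U_dual_def)
  then show "K \<notin> comps n \<Longrightarrow> symmult (Vp ?A) (R (replicate k 1)) K = 0"
    using symmult_R_replicate_1[OF _ k(1), where K = K] k by simp
  assume J: "J \<in> comps n" and C: "conjc J = C' @ [m]"
  have "1 \<le> m"
    using comps_snoc_last(2)[of "conjc J" n] conjc(1)[OF J] C by auto
  have "(\<Sum>K\<in>comps n. Ucoeff J K * symmult (Vp ?A) (R (replicate k 1)) K) = (if des_set ?A \<inter> {1..<n - m}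
      = des_set C' then of_nat ((m - 1) choose (k - 1)) else 0)"
    using k A(1) dual J C by (rule sum_Ucoeff_symmult_R_replicate_1)
  also have "\<dots> = (if des_set I \<inter> {1..<n - m} = des_set C' then of_nat ((m - 1) choose (k - 1)) else 0)"
  proof (cases "k \<le> m")
    case True
    then have "des_set ?A \<inter> {1..<n - m} = des_set I \<inter> {1..<n - m}"
      using A(2) by fastforce
    then show ?thesis
      by simp
  next
    case False
    then have "(m - 1) choose (k - 1) = 0"
      using \<open>1 \<le> m\<close> by (simp add: binomial_eq_0)
    then show ?thesis
      by simp
  qed
  finally show "(\<Sum>K\<in>comps n. Ucoeff J K * symmult (Vp ?A) (R (replicate k 1)) K)
      = (if des_set I \<inter> {1..<n - m} = des_set C' then of_nat ((m - 1) choose (k - 1)) else 0)" .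
qed

lemma U_dual_alternating_sum:
  assumes IH: "\<forall>N<n. \<forall>J\<in>comps N. U_dual N J (V J)" and I: "I \<in> comps n" "I \<noteq> []"
  shows "U_dual n (conjc I) (\<lambda>K. \<Sum>k\<in>{last I..n}. (-1) ^ (k - last I) * of_nat ((k - 1) choose (last I - 1))
      * symmult (Vp (ribbon_prefix (n - k) I)) (R (replicate k 1)) K)"
proof -
  define a where "a = last I"
  define c :: "nat \<Rightarrow> rat" where "c k = (-1) ^ (k - a) * of_nat ((k - 1) choose (a - 1))" for k
  define s where "s k = symmult (Vp (ribbon_prefix (n - k) I)) (R (replicate k 1))" for k
  have a: "1 \<le> a" "a \<le> n"
    using comps_snoc_last[OF I] by (auto simp: a_def)
  note s = symmult_Vp_ribbon_prefix[OF IH I(1), folded s_def]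
  show ?thesis
    unfolding U_dual_def a_def[symmetric] c_def[symmetric] s_def[symmetric]
  proof (intro conjI allI impI ballI)
    fix K assume "K \<notin> comps n"
    then show "(\<Sum>k\<in>{a..n}. c k * s k K) = 0"
      using s(1) a by simp
  next
    fix J assume J: "J \<in> comps n"
    obtain C' m where C: "conjc J = C' @ [m]"
      using comps_snoc_last(1)[of "conjc J" n] conjc(1)[OF J] I comps_Nil_iff by metis
    have m: "1 \<le> m" "m \<le> n"
      using comps_snoc_last(2,3)[of "conjc J" n] conjc(1)[OF J] C by auto
    let ?P = "des_set I \<inter> {1..<n - m} = des_set C'"
    have "(\<Sum>K\<in>comps n. Ucoeff J K * (\<Sum>k\<in>{a..n}. c k * s k K))
        = (\<Sum>k\<in>{a..n}. c k * (\<Sum>K\<in>comps n. Ucoeff J K * s k K))"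
      by (simp add: sum_distrib_left mult.left_commute sum.swap[of _ "comps n"])
    also have "\<dots> = (\<Sum>k\<in>{a..n}. c k * (if ?P then of_nat ((m - 1) choose (k - 1)) else 0))"
      using s(2)[OF _ _ J C] a by (intro sum.cong) auto
    also have "\<dots> = (if ?P \<and> m = a then 1 else 0)"
    proof (cases ?P)
      case True
      then show ?thesis
        using sum_alternating_choose_choose[OF a m, where 'a = rat] by (simp add: c_def)
    qed simp
    also have "\<dots> = (if J = conjc I then 1 else 0)"
      using conjc_eq_iff[OF I J C] by (simp add: a_def)
    finally show "(\<Sum>K\<in>comps n. Ucoeff J K * (\<Sum>k\<in>{a..n}. c k * s k K)) = (if J = conjc I then 1 else 0)" .
  qed
qed

lemma U_dual_V: "J \<in> comps n \<Longrightarrow> U_dual n J (V J)"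
proof (induction n arbitrary: J rule: less_induct)
  case (less n)
  have IH: "\<forall>N<n. \<forall>J\<in>comps N. U_dual N J (V J)"
    using less.IH by blast
  have ex: "\<forall>J\<in>comps n. \<exists>w. U_dual n J w"
  proof
    fix J assume J: "J \<in> comps n"
    show "\<exists>w. U_dual n J w"
    proof (cases "n = 0")
      case True
      then show ?thesis
        using J U_dual_R_Nil by auto
    next
      case False
      then have "conjc J \<in> comps n" "conjc J \<noteq> []"
        using conjc(1)[OF J] comps_Nil_iff by auto
      then have "U_dual n (conjc (conjc J)) (\<lambda>K. \<Sum>k\<in>{last (conjc J)..n}.
          (-1) ^ (k - last (conjc J)) * of_nat ((k - 1) choose (last (conjc J) - 1))
          * symmult (Vp (ribbon_prefix (n - k) (conjc J))) (R (replicate k 1)) K)"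
        by (rule U_dual_alternating_sum[OF IH])
      then show ?thesis
        unfolding conjc(3)[OF J] by blast
    qed
  qed
  then obtain w where "U_dual n J w"
    using less.prems by blast
  moreover from this have "V J = w"
    using V_eqI[OF ex less.prems] by blast
  ultimately show ?case
    by simp
qed

lemma RC_eq_replicate_1_iff:
  assumes "\<sigma> \<in> perms k"
  shows "RC \<sigma> = replicate k 1 \<longleftrightarrow> \<sigma> = rev [1..<k + 1]"
proof -
  have "RC \<sigma> = replicate k 1 \<longleftrightarrow> des_set (RC \<sigma>) = {1..<k}"
    using RC(1)[OF assms] replicate_1_in_comps[of k] comps_eqI des_set_replicate_1 by metis
  also have "\<dots> \<longleftrightarrow> {0 + 1..<k} \<subseteq> inverse_descents \<sigma>"
    using RC[OF assms] des_set_in_comps_subset[of "RC \<sigma>" k] by auto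
  also have "\<dots> \<longleftrightarrow> filter (\<lambda>x. 0 < x) \<sigma> = rev [0 + 1..<k + 1]"
    using assms by (rule top_inverse_descents_iff) simp
  also have "filter (\<lambda>x. 0 < x) \<sigma> = \<sigma>"
    using assms by (auto simp: perms_def filter_id_conv)
  finally show ?thesis
    by simp
qed

lemma SC_rev_upt: "SC (rev [1..<k + 1]) = (if k = 0 then [] else [k])"
proof (cases k)
  case (Suc j)
  have "SC ([] @ k # rev [1..<k]) = SC [] @ [Suc (length (rev [1..<k]))]"
    by (rule SC_append_max) auto
  moreover have "SC [] = []"
    using SC_in_comps[of "[]"] by simp
  ultimately show ?thesis
    using Suc by simp
qed (simp add: SC_eq_init_dom_factors)

lemma Vp_singleton:
  assumes "1 \<le> k"
  shows "Vp [k] = R (replicate k 1)"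
proof -
  have "U_dual k (replicate k 1) (R (replicate k 1))"
    unfolding U_dual_def
  proof (intro conjI allI impI ballI)
    fix J assume J: "J \<in> comps k"
    define \<rho> where "\<rho> = rev [1..<k + 1]"
    have "\<rho> \<in> perms k" "SC \<rho> = [k]"
      using SC_rev_upt[of k] assms by (auto simp: perms_def \<rho>_def)
    moreover have "\<forall>\<sigma>\<in>perms k. RC \<sigma> = replicate k 1 \<longleftrightarrow> \<sigma> = \<rho>"
      using RC_eq_replicate_1_iff unfolding \<rho>_def by blast
    ultimately have "{\<sigma> \<in> perms k. SC \<sigma> = conjc J \<and> RC \<sigma> = replicate k 1}
        = (if conjc J = [k] then {\<rho>} else {})"
      by auto
    moreover have "conjc J = [k] \<longleftrightarrow> J = replicate k 1"
      using conjc(3)[OF J] conjc_singleton[OF assms] conjc(3)[of "[k]" k] assms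
      by (auto simp: comps_def)
    ultimately have "Ucoeff J (replicate k 1) = (if J = replicate k 1 then 1 else 0)"
      using J by (simp add: Ucoeff_def comps_def)
    moreover have "(\<Sum>K\<in>comps k. Ucoeff J K * R (replicate k 1) K) = Ucoeff J (replicate k 1)"
      using replicate_1_in_comps[of k] finite_comps by (simp add: R_def if_distrib sum.delta cong: if_cong)
    ultimately show "(\<Sum>K\<in>comps k. Ucoeff J K * R (replicate k 1) K) = (if J = replicate k 1 then 1 else 0)"
      by simp
  qed (use replicate_1_in_comps in \<open>auto simp: R_def\<close>)
  then have "V (replicate k 1) = R (replicate k 1)"
    using U_dual_V replicate_1_in_comps by (blast intro: V_eqI)
  then show ?thesis
    using conjc_singleton[OF assms] by (simp add: Vp_def)
qed

theorem mainTheorem6: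
  fixes I :: "nat list"
  assumes "is_comp I" and "I \<noteq> []"
  shows "Vp I = (\<lambda>K. \<Sum>k \<in> {last I..sum_list I}.
            (-1) ^ (k - last I) * of_nat ((k - 1) choose (last I - 1))
            * symmult (Vp (ribbon_prefix (sum_list I - k) I)) (Vp [k]) K)"
proof -
  define n where "n = sum_list I"
  have I: "I \<in> comps n"
    using assms(1) by (simp add: comps_def n_def)
  have "1 \<le> last I"
    using comps_snoc_last(2)[OF I assms(2)] .
  then have "Vp [k] = R (replicate k 1)" if "k \<in> {last I..n}" for k
    using that Vp_singleton by simp
  moreover have "Vp I = V (conjc I)"
    using assms(2) by (simp add: Vp_def)
  moreover have "V (conjc I) = (\<lambda>K. \<Sum>k\<in>{last I..n}. (-1) ^ (k - last I) * of_nat ((k - 1) choose (last I - 1))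
      * symmult (Vp (ribbon_prefix (n - k) I)) (R (replicate k 1)) K)"
    using U_dual_V conjc(1)[OF I] U_dual_alternating_sum[OF _ I assms(2)] by (blast intro: V_eqI)
  ultimately show ?thesis
    unfolding n_def by (intro ext sum.cong refl) simp_all
qed

end
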